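(* Let $H=(V,E,w)$ be a hypergraph, $f\in\mathbb{R}^n$, and $e\in E$ a hyperedge with $\mathrm{rank}(e)\ge 2$. Then $$\Big(\max_{u\in e}f(u)+\min_{v\in e}f(v)\Big)^2\le\sum_{\{u,v\}\subseteq e,\ u\ne v}\frac{1}{\mathrm{rank}(e)-1}\big(f(u)+f(v)\big)^2,$$ where the sum is over unordered pairs of distinct vertices of $e$. Equality holds if and only if at most one vertex $v\in e$ has $f(v)\ne0$, or $\mathrm{rank}(e)=2$.
   Context: A hypergraph $H=(V,E,w)$ has vertex set $V$ with $|V|=n$, hyperedges $E$ (subsets of $V$) and positive weights; $\mathrm{rank}(e)=|e|$. *)

theory Defs
  imports Main Complex_Main
begin

definition hypergraph :: "'a set \<Rightarrow> 'a set set \<Rightarrow> ('a set \<Rightarrow> real) \<Rightarrow> bool" where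
  "hypergraph V E w \<longleftrightarrow> finite V \<and> (\<forall>e\<in>E. e \<subseteq> V \<and> e \<noteq> {}) \<and> (\<forall>e\<in>E. w e > 0)"

definition rank :: "'a set \<Rightarrow> nat" where
  "rank e = card e"

definition pairs :: "'a set \<Rightarrow> 'a set set" where
  "pairs e = {p. \<exists>u v. u \<in> e \<and> v \<in> e \<and> u \<noteq> v \<and> p = {u, v}}"

end

theory Submission
  imports Defs
begin

text \<open>Let \<open>f u = M\<close> be the maximum and \<open>f v = m\<close> the minimum of \<open>f\<close> on \<open>e\<close>, with
  \<open>u \<noteq> v\<close>. Besides \<open>{u, v}\<close> itself, each of the \<open>rank e - 2\<close> other vertices \<open>x\<close> lies in
  the pairs \<open>{u, x}\<close> and \<open>{v, x}\<close>, and
  \<open>(M + f x)\<^sup>2 + (m + f x)\<^sup>2 - (M + m)\<^sup>2 = 2 (2 (f x)\<^sup>2 + (M - f x) (f x - m)) \<ge> 0\<close>;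
  the pairs avoiding \<open>u\<close> and \<open>v\<close> contribute nonnegative squares. So the sum over pairs is at
  least \<open>(rank e - 1) (M + m)\<^sup>2\<close>, with equality iff \<open>f\<close> vanishes off \<open>{u, v}\<close> and
  \<open>M m = 0\<close> (or there are no other vertices).\<close>

lemma finite_pairs: "finite e \<Longrightarrow> finite (pairs e)"
  by (rule finite_subset[of _ "Pow e"]) (auto simp: pairs_def)

lemma pairs_remove_two:
  assumes "u \<in> e" "v \<in> e" "u \<noteq> v"
  shows "pairs e = insert {u, v} ((\<lambda>x. {u, x}) ` (e - {u, v}) \<union> (\<lambda>x. {v, x}) ` (e - {u, v})
                                  \<union> pairs (e - {u, v}))"
  using assms unfolding pairs_def by auto blast+

lemma sum_pairs_remove_two:
  assumes "finite e" "u \<in> e" "v \<in> e" "u \<noteq> v"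
  shows "sum h (pairs e) = h {u, v} + (\<Sum>x\<in>e - {u, v}. h {u, x} + h {v, x}) + sum h (pairs (e - {u, v}))"
proof -
  let ?R = "e - {u, v}"
  let ?U = "(\<lambda>x. {u, x}) ` ?R" and ?V = "(\<lambda>x. {v, x}) ` ?R"
  have fin: "finite ?R" "finite (pairs ?R)"
    using assms(1) finite_pairs by auto
  have inj: "inj_on (\<lambda>x. {u, x}) ?R" "inj_on (\<lambda>x. {v, x}) ?R"
    by (auto simp: inj_on_def doubleton_eq_iff)
  have disj: "?U \<inter> ?V = {}" "(?U \<union> ?V) \<inter> pairs ?R = {}"
    using assms by (auto simp: doubleton_eq_iff pairs_def)
  have "{u, v} \<notin> ?U \<union> ?V \<union> pairs ?R"
    using assms by (auto simp: pairs_def doubleton_eq_iff)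
  then have "sum h (pairs e) = h {u, v} + sum h ?U + sum h ?V + sum h (pairs ?R)"
    unfolding pairs_remove_two[OF assms(2-4)] using fin disj
    by (simp add: sum.union_disjoint add.assoc)
  also have "\<dots> = h {u, v} + (\<Sum>x\<in>?R. h {u, x} + h {v, x}) + sum h (pairs ?R)"
    using inj by (simp add: sum.reindex sum.distrib add.assoc)
  finally show ?thesis .
qed

lemma sum_pairs_sq_remove_two:
  fixes f :: "'a \<Rightarrow> real"
  assumes "finite e" "u \<in> e" "v \<in> e" "u \<noteq> v"
  shows "(\<Sum>p\<in>pairs e. (\<Sum>x\<in>p. f x)^2)
           = (real (card e) - 1) * (f u + f v)^2
             + (\<Sum>x\<in>e - {u, v}. (f u + f x)^2 + (f v + f x)^2 - (f u + f v)^2)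
             + (\<Sum>p\<in>pairs (e - {u, v}). (\<Sum>x\<in>p. f x)^2)"
proof -
  let ?R = "e - {u, v}"
  have "card {u, v} \<le> card e"
    using assms by (intro card_mono) auto
  then have card_R: "real (card ?R) = real (card e) - 2"
    using assms by (simp add: card_Diff_subset of_nat_diff)
  have "(\<Sum>x\<in>?R. (\<Sum>y\<in>{u, x}. f y)^2 + (\<Sum>y\<in>{v, x}. f y)^2)
          = (\<Sum>x\<in>?R. (f u + f x)^2 + (f v + f x)^2)"
    by (intro sum.cong) auto
  also have "\<dots> = real (card ?R) * (f u + f v)^2
                  + (\<Sum>x\<in>?R. (f u + f x)^2 + (f v + f x)^2 - (f u + f v)^2)"
    by (simp add: sum_subtractf)
  finally have "(\<Sum>p\<in>pairs e. (\<Sum>x\<in>p. f x)^2)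
      = (f u + f v)^2 + (real (card e) - 2) * (f u + f v)^2
        + (\<Sum>x\<in>?R. (f u + f x)^2 + (f v + f x)^2 - (f u + f v)^2)
        + (\<Sum>p\<in>pairs ?R. (\<Sum>x\<in>p. f x)^2)"
    using sum_pairs_remove_two[OF assms, of "\<lambda>p. (\<Sum>x\<in>p. f x)^2"] assms(4) card_R
    by simp
  then show ?thesis
    by (simp add: algebra_simps)
qed

lemma sq_add_bounds_excess:
  fixes m x M :: real
  shows "(M + x)^2 + (m + x)^2 - (M + m)^2 = 2 * (2 * x^2 + (M - x) * (x - m))"
  by algebra

lemma sq_add_bounds_le:
  fixes m x M :: real
  assumes "m \<le> x" "x \<le> M"
  shows "(M + m)^2 \<le> (M + x)^2 + (m + x)^2"
proof -
  have "(M - x) * (x - m) \<ge> 0"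
    using assms by simp
  then show ?thesis
    using sq_add_bounds_excess[of M x m] zero_le_power2[of x] by smt
qed

lemma sq_add_bounds_eq_iff:
  fixes m x M :: real
  assumes "m \<le> x" "x \<le> M"
  shows "(M + x)^2 + (m + x)^2 = (M + m)^2 \<longleftrightarrow> x = 0 \<and> (M = 0 \<or> m = 0)"
proof -
  have "(M - x) * (x - m) \<ge> 0"
    using assms by simp
  then have "(M + x)^2 + (m + x)^2 = (M + m)^2 \<longleftrightarrow> x^2 = 0 \<and> (M - x) * (x - m) = 0"
    using sq_add_bounds_excess[of M x m] zero_le_power2[of x] by smt
  then show ?thesis
    by auto
qed

lemma obtain_argmax_argmin_distinct:
  fixes f :: "'a \<Rightarrow> 'b :: linorder"
  assumes "finite e" "card e \<ge> 2"
  obtains u v where "u \<in> e" "v \<in> e" "u \<noteq> v" "f u = Max (f ` e)" "f v = Min (f ` e)"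
proof -
  have "e \<noteq> {}"
    using assms(2) by auto
  then have "Max (f ` e) \<in> f ` e" "Min (f ` e) \<in> f ` e"
    using assms(1) by simp_all
  then obtain u w where u: "u \<in> e" "f u = Max (f ` e)" and w: "w \<in> e" "f w = Min (f ` e)"
    by (metis imageE)
  have "\<not> e \<subseteq> {u}"
    using assms card_mono[of "{u}" e] by auto
  then obtain v where v: "v \<in> e" "v \<noteq> u"
    by blast
  show ?thesis
  proof (cases "w = u")
    case True
    have "Min (f ` e) \<le> f v" "f v \<le> Max (f ` e)"
      using assms(1) v(1) by simp_all
    with True u w have "f v = Min (f ` e)"
      by simp
    with u v show ?thesis
      using that by blast
  next
    case False
    with u w show ?thesis
      using that by blast
  qed
qed

lemma card_nonzero_le_one_iff:
  fixes f :: "'a \<Rightarrow> real"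
  assumes "finite e" "u \<in> e" "v \<in> e" "u \<noteq> v"
    and "f u = Max (f ` e)" "f v = Min (f ` e)"
  shows "card {x\<in>e. f x \<noteq> 0} \<le> 1 \<longleftrightarrow> (\<forall>x\<in>e - {u, v}. f x = 0) \<and> (f u = 0 \<or> f v = 0)"
proof
  assume "card {x\<in>e. f x \<noteq> 0} \<le> 1"
  then have single: "a = b" if "a \<in> e" "b \<in> e" "f a \<noteq> 0" "f b \<noteq> 0" for a b
    using assms(1) that by (auto simp: card_le_Suc0_iff_eq)
  have "f x = 0" if "x \<in> e - {u, v}" for x
  proof (rule ccontr)
    assume "f x \<noteq> 0"
    then have "f u = 0" "f v = 0"
      using single[of x u] single[of x v] that assms(2,3) by auto
    moreover have "f v \<le> f x" "f x \<le> f u"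
      using assms(1,5,6) that by simp_all
    ultimately show False
      using \<open>f x \<noteq> 0\<close> by simp
  qed
  moreover have "f u = 0 \<or> f v = 0"
    using single[of u v] assms(2-4) by blast
  ultimately show "(\<forall>x\<in>e - {u, v}. f x = 0) \<and> (f u = 0 \<or> f v = 0)"
    by blast
next
  assume "(\<forall>x\<in>e - {u, v}. f x = 0) \<and> (f u = 0 \<or> f v = 0)"
  then have "{x\<in>e. f x \<noteq> 0} \<subseteq> {u} \<or> {x\<in>e. f x \<noteq> 0} \<subseteq> {v}"
    by auto
  then show "card {x\<in>e. f x \<noteq> 0} \<le> 1"
    using card_mono[of "{u}"] card_mono[of "{v}"] by fastforce
qed
lemma sum_pairs_sq_lower_bound:
  fixes f :: "'a \<Rightarrow> real"
  assumes "finite e" "card e \<ge> 2"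
  shows "(real (card e) - 1) * (Max (f ` e) + Min (f ` e))^2 \<le> (\<Sum>p\<in>pairs e. (\<Sum>x\<in>p. f x)^2)"
    and "(real (card e) - 1) * (Max (f ` e) + Min (f ` e))^2 = (\<Sum>p\<in>pairs e. (\<Sum>x\<in>p. f x)^2)
           \<longleftrightarrow> card {x\<in>e. f x \<noteq> 0} \<le> 1 \<or> card e = 2"
proof -
  obtain u v where uv: "u \<in> e" "v \<in> e" "u \<noteq> v" and
    max_min: "f u = Max (f ` e)" "f v = Min (f ` e)"
    using obtain_argmax_argmin_distinct[OF assms] .
  define M m R where "M = Max (f ` e)" and "m = Min (f ` e)" and "R = e - {u, v}"
  define excess where "excess x = (M + f x)^2 + (m + f x)^2 - (M + m)^2" for x
  define rest where "rest = (\<Sum>p\<in>pairs R. (\<Sum>x\<in>p. f x)^2)"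
  have bounds: "m \<le> f x" "f x \<le> M" if "x \<in> R" for x
    using assms(1) that by (simp_all add: M_def m_def R_def)
  have excess_nonneg: "excess x \<ge> 0" if "x \<in> R" for x
    using sq_add_bounds_le[OF bounds[OF that]] by (simp add: excess_def)
  have rest_nonneg: "rest \<ge> 0"
    by (simp add: rest_def sum_nonneg)
  have sum_eq: "(\<Sum>p\<in>pairs e. (\<Sum>x\<in>p. f x)^2) = (real (card e) - 1) * (M + m)^2 + sum excess R + rest"
    using sum_pairs_sq_remove_two[OF assms(1) uv] max_min
    by (simp add: M_def m_def R_def excess_def rest_def)
  then show "(real (card e) - 1) * (Max (f ` e) + Min (f ` e))^2 \<le> (\<Sum>p\<in>pairs e. (\<Sum>x\<in>p. f x)^2)"
    using sum_nonneg[of R excess] excess_nonneg rest_nonneg by (simp add: M_def m_def)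
  have "(real (card e) - 1) * (M + m)^2 = (\<Sum>p\<in>pairs e. (\<Sum>x\<in>p. f x)^2)
          \<longleftrightarrow> (\<forall>x\<in>R. excess x = 0) \<and> rest = 0"
    using sum_eq sum_nonneg_eq_0_iff[of R excess] sum_nonneg[of R excess] excess_nonneg rest_nonneg
      assms(1) by (auto simp: R_def)
  also have "\<dots> \<longleftrightarrow> card {x\<in>e. f x \<noteq> 0} \<le> 1 \<or> card e = 2"
  proof (cases "R = {}")
    case True
    then have "e = {u, v}"
      using uv by (auto simp: R_def)
    with True uv show ?thesis
      by (simp add: rest_def pairs_def)
  next
    case False
    have "card {u, v} < card e"
      using False assms(1) uv by (intro psubset_card_mono) (auto simp: R_def)
    then have "card e \<noteq> 2"
      using uv(3) by simp
    have "(\<forall>x\<in>R. excess x = 0) \<longleftrightarrow> (\<forall>x\<in>R. f x = 0) \<and> (M = 0 \<or> m = 0)"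
      using sq_add_bounds_eq_iff[OF bounds] False by (auto simp: excess_def)
    moreover have "rest = 0" if "\<forall>x\<in>R. f x = 0"
      unfolding rest_def using that by (intro sum.neutral) (auto simp: pairs_def)
    ultimately show ?thesis
      using card_nonzero_le_one_iff[OF assms(1) uv max_min] \<open>card e \<noteq> 2\<close> max_min
      by (auto simp: M_def m_def R_def)
  qed
  finally show "(real (card e) - 1) * (Max (f ` e) + Min (f ` e))^2 = (\<Sum>p\<in>pairs e. (\<Sum>x\<in>p. f x)^2)
           \<longleftrightarrow> card {x\<in>e. f x \<noteq> 0} \<le> 1 \<or> card e = 2"
    by (simp add: M_def m_def)
qed

theorem lemma7:
  fixes V :: "'a set" and E :: "'a set set" and w :: "'a set \<Rightarrow> real"
    and f :: "'a \<Rightarrow> real" and e :: "'a set"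
  assumes "hypergraph V E w" and "e \<in> E" and "rank e \<ge> 2"
  shows "(Max (f ` e) + Min (f ` e))^2
           \<le> (\<Sum>p\<in>pairs e. (1 / (real (rank e) - 1)) * (\<Sum>x\<in>p. f x)^2)
     \<and> ((Max (f ` e) + Min (f ` e))^2
           = (\<Sum>p\<in>pairs e. (1 / (real (rank e) - 1)) * (\<Sum>x\<in>p. f x)^2)
         \<longleftrightarrow> (card {v\<in>e. f v \<noteq> 0} \<le> 1 \<or> rank e = 2))"
proof -
  let ?c = "(Max (f ` e) + Min (f ` e))^2" and ?S = "\<Sum>p\<in>pairs e. (\<Sum>x\<in>p. f x)^2"
    and ?k = "real (card e) - 1"
  have fin: "finite e"
    using assms(1,2) unfolding hypergraph_def by (meson finite_subset)
  have card_e: "card e \<ge> 2"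
    using assms(3) by (simp add: rank_def)
  then have "?k > 0"
    by simp
  then have "?c \<le> ?S / ?k \<longleftrightarrow> ?k * ?c \<le> ?S" and "?c = ?S / ?k \<longleftrightarrow> ?k * ?c = ?S"
    by (simp_all add: pos_le_divide_eq eq_divide_eq mult.commute)
  moreover have "(\<Sum>p\<in>pairs e. (1 / (real (rank e) - 1)) * (\<Sum>x\<in>p. f x)^2) = ?S / ?k"
    by (simp add: rank_def sum_divide_distrib)
  ultimately show ?thesis
    using sum_pairs_sq_lower_bound[OF fin card_e, of f] by (simp add: rank_def)
qed

end
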